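(* Let $(X,d)$, $(\Lambda,d_\Lambda)$ be compact metric spaces, $\tau:\Lambda\times X\to X$ continuous and $q:X\to\mathcal P(\Lambda)$ continuous. Assume: (M1) there is $s>0$ such that $\int_\Lambda|f(\tau(\lambda,x))-f(\tau(\lambda,y))|\,dq_x(\lambda)\le s\,d(x,y)$ for all $x,y\in X$ and all $f\in\mathrm{Lip}_1(X)$; (H2) there is $r\ge0$ with $d(\tau(\lambda_1,x),\tau(\lambda_2,x))\le r\,d_\Lambda(\lambda_1,\lambda_2)$ for all $\lambda_1,\lambda_2\in\Lambda$, $x\in X$; (H3) there is $t\ge0$ with $d_{MK}(q_x,q_y)\le t\,d(x,y)$ for all $x,y\in X$. Then there exists $c>0$ such that for every $f\in\mathrm{Lip}_1(X)$, the function $B_q(f)$ is $c$-Lipschitz on $X$.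
   Context: $\mathcal{P}(Y)$ is the set of Borel probability measures on a compact metric space $Y$, with $d_{MK}(\mu,\nu)=\sup_{f\in \mathrm{Lip}_1(Y)}\{\int f\,d\mu-\int f\,d\nu\}$, where $\mathrm{Lip}_1(Y)$ is the set of real $1$-Lipschitz functions on $Y$. The transfer operator is $B_q(f)(x)=\int_\Lambda f(\tau(\lambda,x))\,dq_x(\lambda)$. *)

theory Defs
  imports "HOL-Probability.Probability"
begin

definition borel_prob :: "'b::metric_space measure \<Rightarrow> bool" where
  "borel_prob \<mu> \<longleftrightarrow> prob_space \<mu> \<and> sets \<mu> = sets borel"

definition d_MK :: "'b::metric_space measure \<Rightarrow> 'b measure \<Rightarrow> real" where
  "d_MK \<mu> \<nu> = (SUP f\<in>{f::'b \<Rightarrow> real. 1-lipschitz_on UNIV f}.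
                  (\<integral>y. f y \<partial>\<mu>) - (\<integral>y. f y \<partial>\<nu>))"

text \<open>Continuity of x \<mapsto> q x into P(Lambda) with the weak topology:
  all maps x \<mapsto> \<integral> g dq_x, g continuous (hence bounded, Lambda compact), are continuous.\<close>
definition weak_continuous :: "('a::topological_space \<Rightarrow> 'b::metric_space measure) \<Rightarrow> bool" where
  "weak_continuous q \<longleftrightarrow>
     (\<forall>g::'b \<Rightarrow> real. continuous_on UNIV g \<longrightarrow> continuous_on UNIV (\<lambda>x. \<integral>l. g l \<partial>(q x)))"

definition B_q :: "('a \<Rightarrow> 'b measure) \<Rightarrow> ('b \<Rightarrow> 'a \<Rightarrow> 'a) \<Rightarrow> ('a \<Rightarrow> real) \<Rightarrow> 'a \<Rightarrow> real" where
  "B_q q \<tau> f x = (\<integral>l. f (\<tau> l x) \<partial>(q x))"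

end

theory Submission
  imports Defs
begin

text \<open>
  Split \<open>B_q f x - B_q f y\<close> into a change of integrand and a change of measure:
  \<open>\<integral> f(\<tau>(\<lambda>,x)) - f(\<tau>(\<lambda>,y)) dq\<^sub>x\<close>, which (M1) bounds by \<open>s d(x,y)\<close>, plus
  \<open>\<integral> f(\<tau>(\<lambda>,y)) dq\<^sub>x - \<integral> f(\<tau>(\<lambda>,y)) dq\<^sub>y\<close>. By (H2) the integrand \<open>\<lambda> \<mapsto> f(\<tau>(\<lambda>,y))\<close>
  is \<open>r\<close>-Lipschitz, so the second term is at most \<open>r d\<^sub>M\<^sub>K(q\<^sub>x,q\<^sub>y) \<le> r t d(x,y)\<close> by (H3).
  Hence \<open>c = s + r t\<close> works. Compactness of \<open>\<Lambda>\<close> is only needed to make Lipschitz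
  functions integrable and the supremum defining \<open>d\<^sub>M\<^sub>K\<close> finite.
\<close>

lemma borel_prob_integrable_continuous:
  fixes M :: "'l::metric_space measure" and g :: "'l \<Rightarrow> real"
  assumes "compact (UNIV :: 'l set)" and "borel_prob M" and "continuous_on UNIV g"
  shows "integrable M g"
proof -
  interpret prob_space M using assms(2) by (simp add: borel_prob_def)
  have "bounded (range g)"
    using compact_continuous_image[OF assms(3,1)] by (rule compact_imp_bounded)
  then obtain B where "\<And>l. norm (g l) \<le> B" by (auto simp: bounded_iff)
  moreover have "g \<in> borel_measurable M"
    using assms(2) borel_measurable_continuous_onI[OF assms(3)]
    unfolding borel_prob_def by (metis measurable_cong_sets)
  ultimately show ?thesis by (intro integrable_const_bound[where B = B]) auto
qed

lemma borel_prob_integral_1_lipschitz_bound: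
  fixes \<mu> :: "'l::metric_space measure" and f :: "'l \<Rightarrow> real"
  assumes cpt: "compact (UNIV :: 'l set)" and "borel_prob \<mu>" and f: "1-lipschitz_on UNIV f"
  shows "\<bar>(\<integral>y. f y \<partial>\<mu>) - f a\<bar> \<le> diameter (UNIV :: 'l set)"
proof -
  interpret prob_space \<mu> using assms(2) by (simp add: borel_prob_def)
  have "\<bar>f y - f a\<bar> \<le> diameter (UNIV :: 'l set)" for y
    using lipschitz_onD[OF f, of y a] diameter_bounded_bound[OF compact_imp_bounded[OF cpt]]
    by (metis UNIV_I dist_real_def mult_1 order_trans)
  then have "f a - diameter (UNIV :: 'l set) \<le> f y \<and> f y \<le> f a + diameter (UNIV :: 'l set)" for y
    by (metis abs_le_iff diff_le_eq minus_diff_eq add.commute)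
  moreover have "integrable \<mu> f"
    using borel_prob_integrable_continuous[OF cpt assms(2) lipschitz_on_continuous_on[OF f]] .
  ultimately have "(\<integral>y. f y \<partial>\<mu>) \<le> f a + diameter (UNIV :: 'l set)"
    and "f a - diameter (UNIV :: 'l set) \<le> (\<integral>y. f y \<partial>\<mu>)"
    by (auto intro!: integral_le_const integral_ge_const)
  then show ?thesis by (simp add: abs_le_iff)
qed

lemma bdd_above_d_MK:
  fixes \<mu> \<nu> :: "'l::metric_space measure"
  assumes "compact (UNIV :: 'l set)" and "borel_prob \<mu>" and "borel_prob \<nu>"
  shows "bdd_above ((\<lambda>f. (\<integral>y. f y \<partial>\<mu>) - (\<integral>y. f y \<partial>\<nu>)) ` {f::'l \<Rightarrow> real. 1-lipschitz_on UNIV f})"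
proof (rule bdd_aboveI2)
  fix f :: "'l \<Rightarrow> real"
  assume "f \<in> {f. 1-lipschitz_on UNIV f}"
  then show "(\<integral>y. f y \<partial>\<mu>) - (\<integral>y. f y \<partial>\<nu>) \<le> 2 * diameter (UNIV :: 'l set)"
    using borel_prob_integral_1_lipschitz_bound[OF assms(1,2), of f undefined]
      borel_prob_integral_1_lipschitz_bound[OF assms(1,3), of f undefined]
    by auto
qed

lemma lipschitz_integral_diff_le_d_MK:
  fixes \<mu> \<nu> :: "'l::metric_space measure" and g :: "'l \<Rightarrow> real"
  assumes cpt: "compact (UNIV :: 'l set)" and \<mu>: "borel_prob \<mu>" and \<nu>: "borel_prob \<nu>"
    and g: "L-lipschitz_on UNIV g"
  shows "(\<integral>y. g y \<partial>\<mu>) - (\<integral>y. g y \<partial>\<nu>) \<le> L * d_MK \<mu> \<nu>"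
proof (cases "L = 0")
  case True
  interpret \<mu>: prob_space \<mu> using \<mu> by (simp add: borel_prob_def)
  interpret \<nu>: prob_space \<nu> using \<nu> by (simp add: borel_prob_def)
  have "g = (\<lambda>_. g undefined)"
  proof (rule ext)
    show "g y = g undefined" for y :: 'l
      using lipschitz_onD[OF g, of y undefined] True by simp
  qed
  then obtain c where "g = (\<lambda>_. c)" by blast
  then show ?thesis
    using True by (simp add: \<mu>.prob_space \<nu>.prob_space)
next
  case False
  then have L: "L > 0" using lipschitz_on_nonneg[OF g] by simp
  have "1-lipschitz_on UNIV (\<lambda>y. inverse L * g y)"
    using lipschitz_on_cmult_real_nonneg[OF g, of "inverse L"] L by simp
  then have "(\<integral>y. inverse L * g y \<partial>\<mu>) - (\<integral>y. inverse L * g y \<partial>\<nu>) \<le> d_MK \<mu> \<nu>"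
    unfolding d_MK_def by (intro cSUP_upper2[OF bdd_above_d_MK[OF cpt \<mu> \<nu>]]) auto
  then have "inverse L * ((\<integral>y. g y \<partial>\<mu>) - (\<integral>y. g y \<partial>\<nu>)) \<le> d_MK \<mu> \<nu>"
    by (simp add: right_diff_distrib)
  then show ?thesis
    using L by (simp add: field_simps)
qed

lemma real_lipschitz_onI_one_sided:
  fixes f :: "'a::metric_space \<Rightarrow> real"
  assumes "\<And>x y. x \<in> S \<Longrightarrow> y \<in> S \<Longrightarrow> f x - f y \<le> L * dist x y" and "L \<ge> 0"
  shows "L-lipschitz_on S f"
proof (rule lipschitz_onI[OF _ assms(2)])
  fix x y assume "x \<in> S" "y \<in> S"
  then show "dist (f x) (f y) \<le> L * dist x y"
    using assms(1)[of x y] assms(1)[of y x] by (simp add: dist_real_def dist_commute abs_le_iff)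
qed

lemma B_q_diff_le:
  fixes \<tau> :: "'l::metric_space \<Rightarrow> 'x::metric_space \<Rightarrow> 'x" and q :: "'x \<Rightarrow> 'l measure"
    and f :: "'x \<Rightarrow> real"
  assumes cpt: "compact (UNIV :: 'l set)" and q: "\<And>x. borel_prob (q x)"
    and f: "1-lipschitz_on UNIV f"
    and M1: "(\<integral>l. \<bar>f (\<tau> l x) - f (\<tau> l y)\<bar> \<partial>(q x)) \<le> s * dist x y"
    and H2: "\<And>l1 l2 z. dist (\<tau> l1 z) (\<tau> l2 z) \<le> r * dist l1 l2" and "r \<ge> 0"
    and H3: "d_MK (q x) (q y) \<le> t * dist x y"
  shows "B_q q \<tau> f x - B_q q \<tau> f y \<le> (s + r * t) * dist x y"
proof -
  have lip: "r-lipschitz_on UNIV (\<lambda>l. f (\<tau> l z))" for z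
    using lipschitz_on_compose2[OF lipschitz_onI[OF H2 \<open>r \<ge> 0\<close>] lipschitz_on_subset[OF f]]
    by simp
  have int: "integrable (q w) (\<lambda>l. f (\<tau> l z))" for w z
    using borel_prob_integrable_continuous[OF cpt q lipschitz_on_continuous_on[OF lip]] .
  have "B_q q \<tau> f x - B_q q \<tau> f y = (\<integral>l. f (\<tau> l x) - f (\<tau> l y) \<partial>(q x))
      + ((\<integral>l. f (\<tau> l y) \<partial>(q x)) - (\<integral>l. f (\<tau> l y) \<partial>(q y)))"
    unfolding B_q_def using int by simp
  also have "\<dots> \<le> (\<integral>l. \<bar>f (\<tau> l x) - f (\<tau> l y)\<bar> \<partial>(q x)) + r * d_MK (q x) (q y)"
    using int lipschitz_integral_diff_le_d_MK[OF cpt q q lip]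
    by (intro add_mono integral_mono) auto
  also have "\<dots> \<le> s * dist x y + r * (t * dist x y)"
    using M1 H3 \<open>r \<ge> 0\<close> by (intro add_mono mult_left_mono)
  finally show ?thesis by (simp add: distrib_right mult.assoc)
qed

theorem mainTheorem6:
  fixes \<tau> :: "'l::metric_space \<Rightarrow> 'x::metric_space \<Rightarrow> 'x"
    and q :: "'x \<Rightarrow> 'l measure"
  assumes cptX: "compact (UNIV :: 'x set)"
    and cptL: "compact (UNIV :: 'l set)"
    and tau_cont: "continuous_on UNIV (\<lambda>(l, x). \<tau> l x)"
    and q_prob: "\<And>x. borel_prob (q x)"
    and q_cont: "weak_continuous q"
    and M1: "\<exists>s>0. \<forall>x y. \<forall>f::'x \<Rightarrow> real. 1-lipschitz_on UNIV f \<longrightarrow>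
               (\<integral>l. \<bar>f (\<tau> l x) - f (\<tau> l y)\<bar> \<partial>(q x)) \<le> s * dist x y"
    and H2: "\<exists>r\<ge>0. \<forall>l1 l2 x. dist (\<tau> l1 x) (\<tau> l2 x) \<le> r * dist l1 l2"
    and H3: "\<exists>t\<ge>0. \<forall>x y. d_MK (q x) (q y) \<le> t * dist x y"
  shows "\<exists>c>0. \<forall>f::'x \<Rightarrow> real. 1-lipschitz_on UNIV f \<longrightarrow> c-lipschitz_on UNIV (B_q q \<tau> f)"
proof -
  obtain s where "s > 0" and s: "\<And>x y f. 1-lipschitz_on UNIV (f::'x \<Rightarrow> real) \<Longrightarrow>
      (\<integral>l. \<bar>f (\<tau> l x) - f (\<tau> l y)\<bar> \<partial>(q x)) \<le> s * dist x y"
    using M1 by blast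
  obtain r where "r \<ge> 0" and r: "\<And>l1 l2 x. dist (\<tau> l1 x) (\<tau> l2 x) \<le> r * dist l1 l2"
    using H2 by blast
  obtain t where "t \<ge> 0" and t: "\<And>x y. d_MK (q x) (q y) \<le> t * dist x y"
    using H3 by blast
  have "(s + r * t)-lipschitz_on UNIV (B_q q \<tau> f)" if f: "1-lipschitz_on UNIV f" for f
  proof (rule real_lipschitz_onI_one_sided)
    fix x y
    show "B_q q \<tau> f x - B_q q \<tau> f y \<le> (s + r * t) * dist x y"
      by (rule B_q_diff_le[OF cptL q_prob f s[OF f] r \<open>r \<ge> 0\<close> t])
  qed (use \<open>s > 0\<close> \<open>r \<ge> 0\<close> \<open>t \<ge> 0\<close> in simp)
  moreover have "s + r * t > 0"
    using \<open>s > 0\<close> \<open>r \<ge> 0\<close> \<open>t \<ge> 0\<close> by (simp add: add_pos_nonneg)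
  ultimately show ?thesis by blast
qed

end
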